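(* Consider the algorithm CCom described in the context. For every epoch index $i\ge0$, let $B_i$, $G_i$ denote the numbers of bad and good IDs in the system at the end of epoch $i$ and $N_i=B_i+G_i$, and assume $B_0<N_0/3$. Then for all $i\ge0$, $B_i<N_i/3$.
   Context: Model. IDs are good (follow the algorithm) or bad (controlled by a single adversary). The adversary controls at most an $\alpha\le 1/6$ fraction of the total computational power, so at each purge it can solve puzzles for fewer than half as many IDs as there are good IDs. Solving a $1$-round computational puzzle (finding suitable hash-function inputs incorporating the ID's public key and a fresh random string) takes one round for a good ID. Algorithm CCom. A committee maintains $\mathcal S_{\mathrm{old}}$ (IDs present after the most recent purge) and $\mathcal S$ (current IDs). Joining IDs solve an entrance puzzle and are added to $\mathcal S$. Whenever $|(\mathcal S\cup\mathcal S_{\mathrm{old}})\setminus(\mathcal S\cap\mathcal S_{\mathrm{old}})|\ge|\mathcal S_{\mathrm{old}}|/3$, a purge occurs: a fresh random string $r$ is broadcast and every ID must return within one round a solution to a $1$-round puzzle whose inputs include its public key and $r$; IDs failing to do so are removed, and $\mathcal S_{\mathrm{old}},\mathcal S$ are reset to the IDs returning valid solutions. Epochs are the periods between consecutive purges; epoch $i$ ends with a purge, and epoch $0$ refers to the initial state. *)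

theory Defs
  imports Complex_Main
begin

text \<open>For each epoch index i:
  good i, bad i : the good / bad IDs in the system at the end of epoch i
                  (i.e. right after the purge that ends epoch i; for i = 0 the initial state);
  good_pre i, bad_pre i : for i >= 1, the good / bad IDs in the system (the set S)
                  at the moment the purge ending epoch i is triggered.\<close>

definition symdiff :: "'a set \<Rightarrow> 'a set \<Rightarrow> 'a set" where
  "symdiff A B = (A \<union> B) - (A \<inter> B)"

definition ccom_execution ::
  "(nat \<Rightarrow> 'a set) \<Rightarrow> (nat \<Rightarrow> 'a set) \<Rightarrow> (nat \<Rightarrow> 'a set) \<Rightarrow> (nat \<Rightarrow> 'a set) \<Rightarrow> bool" where
  "ccom_execution good bad good_pre bad_pre \<longleftrightarrow>
     (\<forall>i. finite (good i) \<and> finite (bad i) \<and> good i \<inter> bad i = {}) \<and>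
     (\<forall>i\<ge>1. finite (good_pre i) \<and> finite (bad_pre i) \<and> good_pre i \<inter> bad_pre i = {} \<and>
        \<comment> \<open>the purge ending epoch i is triggered by the membership-change condition,
            where S_old = IDs after the previous purge and S = current IDs\<close>
        real (card (symdiff (good_pre i \<union> bad_pre i) (good (i - 1) \<union> bad (i - 1))))
          \<ge> real (card (good (i - 1) \<union> bad (i - 1))) / 3 \<and>
        \<comment> \<open>every good ID solves its 1-round puzzle in time and survives\<close>
        good i = good_pre i \<and>
        \<comment> \<open>only bad IDs that return a valid solution survive\<close>
        bad i \<subseteq> bad_pre i \<and>
        \<comment> \<open>adversary (power at most 1/6) solves puzzles for fewer than half as many IDs
            as there are good IDs at the purge\<close>
        real (card (bad i)) < real (card (good_pre i)) / 2)"

end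

theory Submission
  imports Defs
begin

text \<open>Every purge leaves fewer than half as many bad IDs as good ones, and
  b < g/2 is the same as b < (b + g)/3; epoch 0 is the hypothesis.\<close>

lemma less_third_of_sum_if_less_half:
  fixes b g :: real
  assumes "b < g / 2"
  shows "b < (b + g) / 3"
  using assms by (simp add: field_simps)

lemma ccom_execution_bad_less_half_good:
  assumes "ccom_execution good bad good_pre bad_pre" and "i \<ge> 1"
  shows "real (card (bad i)) < real (card (good i)) / 2"
proof -
  have "good i = good_pre i" and "real (card (bad i)) < real (card (good_pre i)) / 2"
    using assms unfolding ccom_execution_def by blast+
  then show ?thesis by simp
qed

theorem lemma2:
  fixes good bad good_pre bad_pre :: "nat \<Rightarrow> 'a set"
  assumes "ccom_execution good bad good_pre bad_pre"
    and "real (card (bad 0)) < real (card (bad 0) + card (good 0)) / 3"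
  shows "\<forall>i. real (card (bad i)) < real (card (bad i) + card (good i)) / 3"
proof
  fix i :: nat
  show "real (card (bad i)) < real (card (bad i) + card (good i)) / 3"
  proof (cases "i = 0")
    case True
    then show ?thesis using assms(2) by simp
  next
    case False
    then have "real (card (bad i)) < real (card (good i)) / 2"
      using ccom_execution_bad_less_half_good [OF assms(1)] by simp
    then show ?thesis
      using less_third_of_sum_if_less_half by simp
  qed
qed

end
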